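(* In the setting described in the context, for $n\ge1$ let $u_n=\min\{x\in[d,v]: f^{2n}(x)=d\}$, and for $n\ge1$, $i\ge1$ let $u'_{n,i}=\max\{x\in[u_{n+1},u_n]: f^{2n+2i}(x)=d\}$ (these sets are nonempty). Then for each $n\ge1$ and $i\ge1$, on the interval $[u'_{n,i},u_n]$ the map $f$ has no periodic points whose least period is odd and $\le 2n+2i+1$, and no periodic points whose least period is even and $\le 2n+2i$ except points of least period $2n+2i$ and possibly points of least period $2n$.
   Context: Let $I$ be a compact interval and $f:I\to I$ continuous; $f^1=f$, $f^n=f\circ f^{n-1}$. A point $x_0$ is a periodic point of least period $k$ (a period-$k$ point) if $f^k(x_0)=x_0$ and $f^i(x_0)\ne x_0$ for $0<i<k$. Let $m\ge3$ be odd and let $P$ be a periodic orbit of $f$ of least period $m$. Put $e=f^{m-1}(\min P)$. Let $v\in[\min P,e)$ be a point with $f(v)=e$, and let $z\in(v,e)$ be a fixed point of $f$ (such points exist). Define $z_0=\min\{x\in[v,z]: f^2(x)=x\}$ and $d=\max\{x\in[\min P,v]: f^2(x)=z_0\}$ (both sets are nonempty). *)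

theory Defs
  imports "HOL-Analysis.Analysis"
begin

definition least_period :: "(real \<Rightarrow> real) \<Rightarrow> nat \<Rightarrow> real \<Rightarrow> bool" where
  "least_period f k x \<longleftrightarrow> 0 < k \<and> (f ^^ k) x = x \<and> (\<forall>i. 0 < i \<and> i < k \<longrightarrow> (f ^^ i) x \<noteq> x)"

end

theory Submission
  imports Defs
begin

(*
  Write g = f^2.  The point d is sent by g to the g-fixed point z0, g stays below z0 on (d, z0),
  and f jumps above z0 there.  The points u_n, the leftmost g^n-preimages of d in [d, v], decrease
  in n; a g-orbit starting in [d, u_n) stays in [d, z0] for n steps, its t-th point lying above
  u_(n-t).  A periodic point x in [u'_(n,i), u_n] never meets d or z0, so for n + i steps of g its
  orbit stays in (d, z0), and g^n x lies below u_i by maximality of u'_(n,i).  An odd period would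
  end with an f-step from (d, z0) to above z0 > x; an even period 2j with j other than n, n + i would
  return x, or g^n x, to a point below the u_k that such an iterate must exceed.
*)

lemma funpow_fixpoint: "f x = x \<Longrightarrow> (f ^^ n) x = x"
  by (induction n) simp_all

lemma funpow_periodic: "(f ^^ k) x = x \<Longrightarrow> (f ^^ (k * r)) x = x"
  by (metis funpow_fixpoint funpow_mult)

lemma periodic_orbit_reaches_fixpoint:
  assumes "(f ^^ k) x = x" "0 < k" "(f ^^ t) x = c" "f c = c"
  shows "x = c"
proof -
  have "k * t - t + t = k * t" using assms(2) by simp
  then have "x = (f ^^ (k * t - t + t)) x" using funpow_periodic[OF assms(1)] by simp
  also have "\<dots> = (f ^^ (k * t - t)) c" using assms(3) by (simp add: funpow_add)
  also have "\<dots> = c" using funpow_fixpoint assms(4) by metis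
  finally show ?thesis .
qed

lemma funpow_crosses_level:
  fixes h :: "'a \<Rightarrow> 'a::linorder"
  assumes "x < y" "y \<le> (h ^^ t) x"
  shows "\<exists>s. (h ^^ s) x < y \<and> y \<le> h ((h ^^ s) x)"
  using assms(2)
proof (induction t)
  case 0
  then show ?case using assms(1) by simp
next
  case (Suc t)
  then show ?case by (cases "(h ^^ t) x < y") auto
qed

lemma funpow_add_apply: "(f ^^ (m + n)) x = (f ^^ m) ((f ^^ n) x)"
  by (simp add: funpow_add)

lemma funpow_maps_into: "f ` S \<subseteq> S \<Longrightarrow> (f ^^ n) ` S \<subseteq> S"
  by (induction n) auto

lemma continuous_on_funpow:
  assumes "continuous_on S f" "f ` S \<subseteq> S"
  shows "continuous_on S (f ^^ n)"
proof (induction n)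
  case 0
  then show ?case by (simp add: continuous_on_id)
next
  case (Suc n)
  have "continuous_on S (\<lambda>x. f ((f ^^ n) x))"
    using continuous_on_compose2[OF assms(1) Suc funpow_maps_into[OF assms(2)]] .
  then show ?case by (simp add: o_def)
qed

lemma IVT_between:
  fixes h :: "real \<Rightarrow> real"
  assumes "continuous_on {s..t} h" "s \<le> t" "min (h s) (h t) \<le> y" "y \<le> max (h s) (h t)"
  shows "\<exists>x\<in>{s..t}. h x = y"
  using assms IVT'[of h s y t] IVT2'[of h t y s] by (cases "h s \<le> h t") auto

lemma Inf_Collect_atLeastAtMost_le:
  fixes x :: real
  shows "x \<in> {s..t} \<Longrightarrow> P x \<Longrightarrow> Inf {x \<in> {s..t}. P x} \<le> x"
  by (rule cInf_lower) (auto intro: bdd_belowI[of _ s])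

lemma Sup_Collect_atLeastAtMost_ge:
  fixes x :: real
  shows "x \<in> {s..t} \<Longrightarrow> P x \<Longrightarrow> x \<le> Sup {x \<in> {s..t}. P x}"
  by (rule cSup_upper) (auto intro: bdd_aboveI[of _ t])

lemma
  fixes h k :: "real \<Rightarrow> real"
  assumes "continuous_on {s..t} h" "continuous_on {s..t} k" "x \<in> {s..t}" "h x = k x"
  shows Inf_coincidence_set_mem: "Inf {x \<in> {s..t}. h x = k x} \<in> {x \<in> {s..t}. h x = k x}"
    and Sup_coincidence_set_mem: "Sup {x \<in> {s..t}. h x = k x} \<in> {x \<in> {s..t}. h x = k x}"
proof -
  let ?S = "{x \<in> {s..t}. h x = k x}"
  have "closed {x \<in> {s..t}. h x - k x = 0}"
    using assms(1,2) by (intro continuous_closed_preimage_constant continuous_intros) auto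
  moreover have "{x \<in> {s..t}. h x - k x = 0} = ?S" by auto
  ultimately have "closed ?S" by simp
  moreover have "?S \<noteq> {}" using assms(3,4) by blast
  moreover have "bdd_below ?S" "bdd_above ?S" by (auto intro: bdd_belowI[of _ s] bdd_aboveI[of _ t])
  ultimately show "Inf ?S \<in> ?S" "Sup ?S \<in> ?S"
    using closed_contains_Inf[of ?S] closed_contains_Sup[of ?S] by blast+
qed

locale preimage_ladder =
  fixes g :: "real \<Rightarrow> real" and a b d v c :: real
  assumes continuous: "continuous_on {a..b} g"
    and maps_into: "g ` {a..b} \<subseteq> {a..b}"
    and ordered: "a \<le> d" "d < v" "v < c" "c \<le> b"
    and d_to_c: "g d = c"
    and fixed_c: "g c = c"
    and v_below_d: "g v \<le> d"
    and below_c: "\<And>x. x \<in> {d<..<c} \<Longrightarrow> g x < c"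
begin

lemma continuous_iterate: "a \<le> s \<Longrightarrow> t \<le> b \<Longrightarrow> continuous_on {s..t} (g ^^ n)"
  by (rule continuous_on_subset[OF continuous_on_funpow[OF continuous maps_into]]) auto

lemma iterate_d_eq_c: "0 < n \<Longrightarrow> (g ^^ n) d = c"
  by (cases n) (simp_all add: funpow_swap1 d_to_c fixed_c funpow_fixpoint)

lemma g_le_c: "x \<in> {d..c} \<Longrightarrow> g x \<le> c"
  using below_c[of x] d_to_c fixed_c by (cases "x = d \<or> x = c") auto

definition u :: "nat \<Rightarrow> real" where
  "u n = Inf {x \<in> {d..v}. (g ^^ n) x = d}"

lemma u_least: "x \<in> {d..v} \<Longrightarrow> (g ^^ n) x = d \<Longrightarrow> u n \<le> x"
  unfolding u_def by (rule Inf_Collect_atLeastAtMost_le)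

lemma u_attained:
  assumes "x \<in> {d..v}" "(g ^^ n) x = d"
  shows "u n \<in> {d..v}" "(g ^^ n) (u n) = d"
  using Inf_coincidence_set_mem[of d v "g ^^ n" "\<lambda>_. d" x] continuous_iterate[of d v] ordered assms
  unfolding u_def by auto

lemma preimage_1: "\<exists>x\<in>{d..v}. g x = d"
  using IVT_between[of d v g d] continuous_iterate[of d v 1] ordered d_to_c v_below_d by auto

lemma preimage_step:
  assumes "0 < n" "x \<in> {d..v}" "(g ^^ n) x = d"
  shows "\<exists>y\<in>{d..<u n}. (g ^^ Suc n) y = d"
proof -
  have u1: "u 1 \<in> {d..v}" "g (u 1) = d" using preimage_1 u_attained[of _ 1] by auto
  have un: "u n \<in> {d..v}" "(g ^^ n) (u n) = d" using u_attained assms(2,3) by auto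
  obtain y where y: "y \<in> {d..u n}" "(g ^^ n) y = u 1"
    using IVT_between[of d "u n" "g ^^ n" "u 1"] continuous_iterate[of d "u n"] iterate_d_eq_c[OF assms(1)]
      un u1 ordered by auto
  have "y \<noteq> u n" using y un u1 d_to_c ordered by auto
  then show ?thesis using y u1 by (intro bexI[of _ y]) auto
qed

lemma preimage_exists: "\<exists>x\<in>{d..v}. (g ^^ n) x = d"
proof -
  have "\<exists>x\<in>{d..v}. (g ^^ Suc k) x = d" for k
  proof (induction k)
    case 0
    then show ?case using preimage_1 by simp
  next
    case (Suc k)
    then obtain x where x: "x \<in> {d..v}" "(g ^^ Suc k) x = d" by blast
    then have "u (Suc k) \<le> v" using u_attained by auto
    then show ?case using preimage_step[OF _ x] by fastforce
  qed
  then show ?thesis using ordered by (cases n) auto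
qed

lemma u_mem: "u n \<in> {d..v}" "(g ^^ n) (u n) = d"
  using preimage_exists[of n] u_attained by auto

lemma u_Suc_less: "0 < n \<Longrightarrow> u (Suc n) < u n"
  using preimage_step[of n] u_mem[of n] u_least[of _ "Suc n"] by fastforce

lemma u_antimono:
  assumes "0 < n" "n \<le> k"
  shows "u k \<le> u n"
  using assms(2)
proof (induction k rule: dec_induct)
  case base
  then show ?case by simp
next
  case (step k)
  then show ?case using u_Suc_less[of k] assms(1) by simp
qed

lemma iterate_gt_d:
  assumes "0 < n" "x \<in> {d..<u n}"
  shows "d < (g ^^ n) x"
proof (rule ccontr)
  assume "\<not> d < (g ^^ n) x"
  moreover have "x \<le> v" using assms(2) u_mem[of n] by auto
  ultimately obtain y where "y \<in> {d..x}" "(g ^^ n) y = d"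
    using IVT_between[of d x "g ^^ n" d] continuous_iterate[of d x n] iterate_d_eq_c[OF assms(1)]
      ordered assms(2) by auto
  then have "u n \<le> y" using u_least \<open>x \<le> v\<close> by auto
  then show False using \<open>y \<in> {d..x}\<close> assms(2) by auto
qed

lemma iterates_in_band:
  assumes "0 < n" "x \<in> {d..<u n}" "t \<le> n"
  shows "(g ^^ t) x \<in> {d..c}"
  using assms(3)
proof (induction t)
  case 0
  then show ?case using assms(2) u_mem[of n] ordered by auto
next
  case (Suc t)
  then have "g ((g ^^ t) x) \<le> c" using g_le_c by simp
  moreover have "x \<in> {d..<u (Suc t)}" using assms(2) u_antimono[of "Suc t" n] Suc.prems by auto
  ultimately show ?case using iterate_gt_d[of "Suc t" x] by simp
qed

lemma u_less_iterate:
  assumes "0 < t" "t < n" "x \<in> {d..<u n}"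
  shows "u (n - t) < (g ^^ t) x"
proof (rule ccontr)
  assume "\<not> u (n - t) < (g ^^ t) x"
  moreover have "u (n - t) \<le> c" "x \<le> v" using u_mem[of "n - t"] u_mem[of n] assms(3) ordered by auto
  ultimately obtain y where y: "y \<in> {d..x}" "(g ^^ t) y = u (n - t)"
    using IVT_between[of d x "g ^^ t" "u (n - t)"] continuous_iterate[of d x t] iterate_d_eq_c[OF assms(1)]
      ordered assms(3) by auto
  have "(g ^^ n) y = (g ^^ (n - t)) ((g ^^ t) y)"
    using funpow_add_apply[of "n - t" t g y] assms(2) by simp
  then have "(g ^^ n) y = d" using y(2) u_mem by simp
  then have "u n \<le> y" using u_least y(1) \<open>x \<le> v\<close> by auto
  then show False using y(1) assms(3) by auto
qed

lemma iterate_ne_self: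
  assumes "0 < j" "j < n" "x \<in> {d..<u n}"
  shows "(g ^^ j) x \<noteq> x"
  using u_less_iterate[OF assms] u_antimono[of "n - j" n] assms by auto

definition u' :: "nat \<Rightarrow> nat \<Rightarrow> real" where
  "u' n i = Sup {x \<in> {u (Suc n)..u n}. (g ^^ (n + i)) x = d}"

lemma u'_greatest: "x \<in> {u (Suc n)..u n} \<Longrightarrow> (g ^^ (n + i)) x = d \<Longrightarrow> x \<le> u' n i"
  unfolding u'_def by (rule Sup_Collect_atLeastAtMost_ge)

lemma u'_mem:
  assumes "0 < n" "0 < i"
  shows "u' n i \<in> {u (Suc n)..u n}" "(g ^^ (n + i)) (u' n i) = d"
proof -
  have "(g ^^ Suc n) (u n) = c" using u_mem d_to_c by simp
  moreover have "u (i - 1) \<in> {d..c}" using u_mem[of "i - 1"] ordered by auto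
  ultimately obtain y where y: "y \<in> {u (Suc n)..u n}" "(g ^^ Suc n) y = u (i - 1)"
    using IVT_between[of "u (Suc n)" "u n" "g ^^ Suc n" "u (i - 1)"]
      continuous_iterate[of "u (Suc n)" "u n"] u_mem[of "Suc n"] u_mem[of n] u_Suc_less[OF assms(1)]
      ordered by fastforce
  have "(g ^^ (n + i)) y = (g ^^ (i - 1)) ((g ^^ Suc n) y)"
    using funpow_add_apply[of "i - 1" "Suc n" g y] assms(2) by (simp add: add.commute)
  then have "(g ^^ (n + i)) y = d" using y(2) u_mem by simp
  then show "u' n i \<in> {u (Suc n)..u n}" "(g ^^ (n + i)) (u' n i) = d"
    using Sup_coincidence_set_mem[of "u (Suc n)" "u n" "g ^^ (n + i)" "\<lambda>_. d" y]
      continuous_iterate[of "u (Suc n)" "u n"] u_mem[of "Suc n"] u_mem[of n] y(1) ordered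
    unfolding u'_def by auto
qed

lemma iterate_below_u:
  assumes "0 < n" "0 < i" "x \<in> {u' n i<..u n}"
  shows "(g ^^ n) x < u i"
proof (rule ccontr)
  assume "\<not> (g ^^ n) x < u i"
  moreover have "u' n i \<ge> d" using u'_mem[OF assms(1,2)] u_mem[of "Suc n"] by auto
  ultimately obtain y where y: "y \<in> {x..u n}" "(g ^^ n) y = u i"
    using IVT_between[of x "u n" "g ^^ n" "u i"] continuous_iterate[of x "u n" n] u_mem[of n]
      u_mem[of i] assms(3) ordered by fastforce
  have "(g ^^ (n + i)) y = (g ^^ i) ((g ^^ n) y)" by (metis funpow_add_apply add.commute)
  then have "(g ^^ (n + i)) y = d" using y(2) u_mem by simp
  then have "y \<le> u' n i" using u'_greatest[of y] y(1) u'_mem[OF assms(1,2)] assms(3) by auto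
  then show False using y(1) assms(3) by auto
qed

lemma periodic_orbit_avoids_c:
  "(g ^^ k) x = x \<Longrightarrow> 0 < k \<Longrightarrow> x \<noteq> c \<Longrightarrow> (g ^^ t) x \<noteq> c"
  using periodic_orbit_reaches_fixpoint fixed_c by metis

lemma periodic_orbit_avoids_d:
  "(g ^^ k) x = x \<Longrightarrow> 0 < k \<Longrightarrow> x \<noteq> c \<Longrightarrow> (g ^^ t) x \<noteq> d"
  using periodic_orbit_avoids_c[of k x "Suc t"] d_to_c by auto

context
  fixes n i k :: nat and x :: real
  assumes positive: "0 < n" "0 < i" "0 < k"
    and window: "x \<in> {u' n i..u n}"
    and periodic: "(g ^^ k) x = x"
begin

lemma periodic_in_open_window: "x \<in> {u' n i<..<u n}" "x < c"
proof -
  show "x < c" using window u_mem[of n] ordered by auto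
  then show "x \<in> {u' n i<..<u n}"
    using window periodic_orbit_avoids_d[OF periodic positive(3)] u'_mem[OF positive(1,2)] u_mem[of n]
    by (metis greaterThanLessThan_iff atLeastAtMost_iff order_less_le)
qed

lemma periodic_iterate_n_mem: "(g ^^ n) x \<in> {d<..<u i}"
  using iterate_gt_d[OF positive(1)] iterate_below_u[OF positive(1,2)] periodic_in_open_window
    u'_mem[OF positive(1,2)] u_mem[of "Suc n"] by fastforce

lemma periodic_orbit_in_band:
  assumes "t \<le> n + i"
  shows "(g ^^ t) x \<in> {d<..<c}"
proof -
  have "(g ^^ t) x \<in> {d..c}"
  proof (cases "t \<le> n")
    case True
    then show ?thesis
      using iterates_in_band[OF positive(1)] periodic_in_open_window u'_mem[OF positive(1,2)]
        u_mem[of "Suc n"] by fastforce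
  next
    case False
    then have "(g ^^ t) x = (g ^^ (t - n)) ((g ^^ n) x)"
      using funpow_add_apply[of "t - n" n g x] by simp
    moreover have "t - n \<le> i" using assms by simp
    ultimately show ?thesis
      using iterates_in_band[OF positive(2)] periodic_iterate_n_mem by fastforce
  qed
  moreover have "(g ^^ t) x \<noteq> c" "(g ^^ t) x \<noteq> d"
    using periodic_orbit_avoids_c[OF periodic positive(3)] periodic_orbit_avoids_d[OF periodic positive(3)]
      periodic_in_open_window(2) by auto
  ultimately show ?thesis by auto
qed

lemma periodic_period_cases:
  assumes "0 < j" "j \<le> n + i" "(g ^^ j) x = x"
  shows "j = n \<or> j = n + i"
proof (rule ccontr)
  assume other: "\<not> (j = n \<or> j = n + i)"
  define y where "y = (g ^^ n) x"
  have x: "x \<in> {d..<u n}"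
    using periodic_in_open_window u'_mem[OF positive(1,2)] u_mem[of "Suc n"] by fastforce
  have y: "y \<in> {d..<u i}" using periodic_iterate_n_mem unfolding y_def by auto
  consider "j < n" | "n < j" "j < i" | "n < j" "i \<le> j" "j < n + i"
    using other assms(2) by linarith
  then show False
  proof cases
    case 1
    then show False using iterate_ne_self[OF assms(1) _ x] assms(3) by simp
  next
    case 2
    have "(g ^^ j) y = (g ^^ n) ((g ^^ j) x)"
      unfolding y_def by (metis funpow_add_apply add.commute)
    then have "(g ^^ j) y = y" using assms(3) y_def by simp
    then show False using iterate_ne_self[OF assms(1) 2(2) y] by simp
  next
    case 3
    have "x = (g ^^ (j - n)) y"
      using funpow_add_apply[of "j - n" n g x] 3 assms(3) unfolding y_def by simp
    moreover have "u (i - (j - n)) < (g ^^ (j - n)) y" using u_less_iterate[of "j - n" i y] 3 y by simp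
    moreover have "u n \<le> u (i - (j - n))" using u_antimono[of "i - (j - n)" n] 3 by simp
    ultimately show False using x by simp
  qed
qed

end

end

locale odd_cycle =
  fixes f :: "real \<Rightarrow> real" and a b p v z z0 d :: real and m :: nat and P :: "real set"
  assumes ab: "a \<le> b"
    and continuous: "continuous_on {a..b} f" and maps_into: "f ` {a..b} \<subseteq> {a..b}"
    and odd_m: "odd m" and m_ge_3: "m \<ge> 3"
    and p_mem: "p \<in> {a..b}" and period_p: "least_period f m p"
    and P_def: "P = {(f ^^ k) p | k. k < m}"
    and v_mem: "v \<in> {Min P..<(f ^^ (m - 1)) (Min P)}" and f_v: "f v = (f ^^ (m - 1)) (Min P)"
    and z_mem: "z \<in> {v<..<(f ^^ (m - 1)) (Min P)}" and f_z: "f z = z"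
    and z0_def: "z0 = Inf {x \<in> {v..z}. (f ^^ 2) x = x}"
    and d_def: "d = Sup {x \<in> {Min P..v}. (f ^^ 2) x = z0}"
begin

abbreviation "g \<equiv> f ^^ 2"
abbreviation "e \<equiv> (f ^^ (m - 1)) (Min P)"

lemma g_apply: "g x = f (f x)"
  by (simp add: numeral_2_eq_2)

lemma continuous_g: "a \<le> s \<Longrightarrow> t \<le> b \<Longrightarrow> continuous_on {s..t} g"
  by (rule continuous_on_subset[OF continuous_on_funpow[OF continuous maps_into]]) auto

lemma f_m_p: "(f ^^ m) p = p"
  using period_p unfolding least_period_def by simp

lemma P_eq: "P = (\<lambda>k. (f ^^ k) p) ` {..<m}"
  unfolding P_def by auto

lemma p_in_P: "p \<in> P"
  unfolding P_def using m_ge_3 by (auto intro!: exI[of _ 0])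

lemma Min_P_mem: "Min P \<in> P"
  using P_eq p_in_P by (intro Min_in) auto

lemma Min_P_le: "x \<in> P \<Longrightarrow> Min P \<le> x"
  using P_eq by simp

lemma f_maps_P: "f ` P \<subseteq> P"
proof
  fix y
  assume "y \<in> f ` P"
  then obtain k where k: "k < m" "y = (f ^^ Suc k) p" using P_eq by auto
  show "y \<in> P"
  proof (cases "Suc k < m")
    case True
    then show ?thesis using k P_eq by blast
  next
    case False
    then have "Suc k = m" using k(1) by simp
    then have "y = (f ^^ m) p" using k(2) by (simp only:)
    then show ?thesis using f_m_p p_in_P by simp
  qed
qed

lemma P_subset: "P \<subseteq> {a..b}"
  using P_eq funpow_maps_into[OF maps_into] p_mem by (fastforce simp: image_subset_iff)

lemma f_m_on_P: "x \<in> P \<Longrightarrow> (f ^^ m) x = x"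
  using P_eq f_m_p funpow_add_apply[of m _ f p] funpow_add_apply[of _ m f p] by (auto simp: add.commute)

lemma e_mem: "e \<in> P"
  using funpow_maps_into[OF f_maps_P] Min_P_mem by blast

lemma f_e: "f e = Min P"
  using f_m_on_P[OF Min_P_mem] m_ge_3 funpow_add_apply[of 1 "m - 1" f "Min P"] by simp

lemma f_Min_P_ne: "f (Min P) \<noteq> Min P"
proof
  assume fixed: "f (Min P) = Min P"
  obtain j where j: "j < m" "Min P = (f ^^ j) p" using Min_P_mem P_eq by auto
  have "p = (f ^^ (m - j)) (Min P)"
    using f_m_p funpow_add_apply[of "m - j" j f p] j by simp
  then have "f p = p" using fixed funpow_fixpoint[of f "Min P"] by simp
  moreover have "(f ^^ 1) p \<noteq> p"
    using period_p m_ge_3 unfolding least_period_def by (auto elim!: allE[of _ 1])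
  ultimately show False by simp
qed

lemma g_v: "g v = Min P"
  using f_v f_e by (simp add: g_apply)

lemma e_eq_g_iterate: "(g ^^ ((m - 1) div 2)) (Min P) = e"
  using odd_m by (simp add: funpow_mult)

lemma Min_P_less_v: "Min P < v"
proof -
  have "v \<noteq> Min P"
  proof
    assume "v = Min P"
    then have "e = Min P" using g_v e_eq_g_iterate funpow_fixpoint[of g "Min P"] by metis
    then show False using f_e f_Min_P_ne by simp
  qed
  then show ?thesis using v_mem by simp
qed

lemma orbit_bounds: "a \<le> Min P" "e \<le> b" "v < z" "z < e"
  using P_subset Min_P_mem e_mem z_mem by auto

lemma z0_mem: "z0 \<in> {v..z}" "g z0 = z0"
  using Inf_coincidence_set_mem[of v z g "\<lambda>x. x" z] continuous_g[of v z] continuous_on_id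
    orbit_bounds v_mem f_z Min_P_less_v unfolding z0_def by (auto simp: g_apply)

lemma z0_least: "x \<in> {v..z} \<Longrightarrow> g x = x \<Longrightarrow> z0 \<le> x"
  unfolding z0_def by (rule Inf_Collect_atLeastAtMost_le)

lemma v_less_z0: "v < z0"
  using z0_mem g_v Min_P_less_v by (cases "z0 = v") auto

lemma g_below_id: 
  assumes "x \<in> {v..<z0}"
  shows "g x < x"
proof (rule ccontr)
  assume "\<not> g x < x"
  then obtain y where y: "y \<in> {v..x}" "g y - y = 0"
    using IVT_between[of v x "\<lambda>y. g y - y" 0] continuous_g[of v x] orbit_bounds z0_mem assms g_v
      Min_P_less_v by (fastforce intro: continuous_intros)
  then have "z0 \<le> y" using z0_least z0_mem assms by auto
  then show False using y assms by auto
qed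

lemma preimage_z0_exists: "\<exists>x\<in>{Min P..v}. g x = z0"
proof -
  have "z0 \<le> (g ^^ ((m - 1) div 2)) (Min P)"
    using e_eq_g_iterate z0_mem orbit_bounds by simp
  then obtain s where s: "(g ^^ s) (Min P) < z0" "z0 \<le> g ((g ^^ s) (Min P))"
    using funpow_crosses_level[of "Min P" z0] Min_P_less_v v_less_z0 by auto
  define y where "y = (g ^^ s) (Min P)"
  have "y \<in> P"
    unfolding y_def funpow_mult using funpow_maps_into[OF f_maps_P] Min_P_mem by blast
  then have "Min P \<le> y" by (rule Min_P_le)
  moreover have "y < v" using g_below_id[of y] s unfolding y_def by fastforce
  ultimately show ?thesis
    using IVT_between[of y v g z0] continuous_g[of y v] orbit_bounds s g_v Min_P_less_v v_less_z0
    unfolding y_def by fastforce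
qed

lemma d_mem: "d \<in> {Min P..v}" "g d = z0"
  using preimage_z0_exists Sup_coincidence_set_mem[of "Min P" v g "\<lambda>_. z0"] continuous_g[of "Min P" v]
    orbit_bounds unfolding d_def by auto

lemma d_greatest: "x \<in> {Min P..v} \<Longrightarrow> g x = z0 \<Longrightarrow> x \<le> d"
  unfolding d_def by (rule Sup_Collect_atLeastAtMost_ge)

lemma d_less_v: "d < v"
  using d_mem g_v Min_P_less_v v_less_z0 by (cases "d = v") auto

lemma g_below_z0:
  assumes "x \<in> {d<..<z0}"
  shows "g x < z0"
proof (cases "x \<le> v")
  case True
  show ?thesis
  proof (rule ccontr)
    assume "\<not> g x < z0"
    then obtain y where "y \<in> {x..v}" "g y = z0"
      using IVT_between[of x v g z0] continuous_g[of x v] orbit_bounds d_mem assms True g_v Min_P_less_v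
        v_less_z0 by fastforce
    then show False using d_greatest[of y] d_mem assms by auto
  qed
next
  case False
  then show ?thesis using g_below_id[of x] assms by auto
qed

lemma z0_le_f_z0: "z0 \<le> f z0"
proof (rule ccontr)
  assume "\<not> z0 \<le> f z0"
  have "continuous_on {v..z0} (\<lambda>y. f y - y)"
    using orbit_bounds z0_mem v_mem
    by (intro continuous_intros continuous_on_subset[OF continuous]) auto
  moreover have "0 \<le> f v - v" using f_v v_mem by simp
  ultimately obtain y where y: "y \<in> {v..z0}" "f y - y = 0"
    using IVT_between[of v z0 "\<lambda>y. f y - y" 0] \<open>\<not> z0 \<le> f z0\<close> v_less_z0 by fastforce
  then have "g y = y" by (simp add: g_apply)
  moreover have "y \<noteq> z0" using y \<open>\<not> z0 \<le> f z0\<close> by auto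
  ultimately show False using g_below_id[of y] y by auto
qed

lemma f_above_z0:
  assumes "x \<in> {d<..<z0}"
  shows "z0 < f x"
proof (rule ccontr)
  assume "\<not> z0 < f x"
  moreover have "z0 \<le> f v" using f_v orbit_bounds z0_mem by auto
  moreover have "continuous_on {s..t} f" if "s \<in> {x, v}" "t \<in> {x, v}" for s t
    using orbit_bounds d_mem z0_mem assms that by (intro continuous_on_subset[OF continuous]) auto
  ultimately have "\<exists>y \<in> {x..v} \<union> {v..x}. f y = z0"
    using IVT_between[of x v f z0] IVT_between[of v x f z0]
    by (cases "x \<le> v") (simp_all add: min_le_iff_disj le_max_iff_disj, blast)
  then obtain y where y: "y \<in> {x..v} \<union> {v..x}" "f y = z0" by blast
  then have "y \<in> {d<..<z0}" using assms d_less_v v_less_z0 by auto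
  then show False using g_below_z0[of y] y z0_le_f_z0 by (simp add: g_apply)
qed

sublocale preimage_ladder g a b d v z0
proof
  show "continuous_on {a..b} g" using continuous_g by simp
  show "g ` {a..b} \<subseteq> {a..b}" using funpow_maps_into[OF maps_into] .
  show "a \<le> d" "d < v" "v < z0" "z0 \<le> b" "g d = z0" "g z0 = z0" "g v \<le> d"
    using orbit_bounds d_mem d_less_v v_less_z0 z0_mem g_v by auto
  show "\<And>x. x \<in> {d<..<z0} \<Longrightarrow> g x < z0" by (rule g_below_z0)
qed

lemma periods_in_window:
  assumes "0 < n" "0 < i" "x \<in> {u' n i..u n}" "least_period f k x"
  shows "(odd k \<longrightarrow> k > 2 * n + 2 * i + 1) \<and>
         (even k \<and> k \<le> 2 * n + 2 * i \<longrightarrow> k = 2 * n + 2 * i \<or> k = 2 * n)"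
proof -
  have k: "0 < k" "(f ^^ k) x = x" using assms(4) unfolding least_period_def by auto
  then have g_periodic: "(g ^^ k) x = x"
    using funpow_periodic[of k f x 2] by (simp add: funpow_mult mult.commute)
  have "x < z0" using periodic_in_open_window(2)[OF assms(1,2) k(1) assms(3) g_periodic] .
  have "\<not> k \<le> 2 * n + 2 * i + 1" if "odd k"
  proof
    assume short: "k \<le> 2 * n + 2 * i + 1"
    obtain t where t: "k = Suc (2 * t)" using \<open>odd k\<close> by (metis oddE Suc_eq_plus1 add.commute)
    then have "(g ^^ t) x \<in> {d<..<z0}"
      using periodic_orbit_in_band[OF assms(1,2) k(1) assms(3) g_periodic] short by simp
    then have "z0 < (f ^^ k) x" using f_above_z0 t by (simp add: funpow_mult)
    then show False using k(2) \<open>x < z0\<close> by simp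
  qed
  moreover have "k = 2 * n + 2 * i \<or> k = 2 * n" if "even k" "k \<le> 2 * n + 2 * i"
  proof -
    obtain j where j: "k = 2 * j" using \<open>even k\<close> by blast
    then have "(g ^^ j) x = x" using k(2) by (simp add: funpow_mult)
    then have "j = n \<or> j = n + i"
      using periodic_period_cases[OF assms(1,2) k(1) assms(3) g_periodic] j k(1) that(2) by simp
    then show ?thesis using j by auto
  qed
  ultimately show ?thesis by auto
qed

end

theorem lemma8:
  fixes f :: "real \<Rightarrow> real" and a b p v z z0 d :: real and m :: nat and P :: "real set"
  assumes "a \<le> b"
    and "continuous_on {a..b} f" and "f ` {a..b} \<subseteq> {a..b}"
    and "odd m" and "m \<ge> 3"
    and "p \<in> {a..b}" and "least_period f m p"
    and "P = {(f ^^ k) p | k. k < m}"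
    and "v \<in> {Min P..<(f ^^ (m - 1)) (Min P)}" and "f v = (f ^^ (m - 1)) (Min P)"
    and "z \<in> {v<..<(f ^^ (m - 1)) (Min P)}" and "f z = z"
    and "z0 = Inf {x \<in> {v..z}. (f ^^ 2) x = x}"
    and "d = Sup {x \<in> {Min P..v}. (f ^^ 2) x = z0}"
  shows "\<forall>n \<ge> 1. \<forall>i \<ge> 1.
           (let u = (\<lambda>n. Inf {x \<in> {d..v}. (f ^^ (2 * n)) x = d});
                u' = Sup {x \<in> {u (n + 1)..u n}. (f ^^ (2 * n + 2 * i)) x = d}
            in \<forall>x \<in> {u'..u n}. \<forall>k. least_period f k x \<longrightarrow>
                 (odd k \<longrightarrow> k > 2 * n + 2 * i + 1) \<and>
                 (even k \<and> k \<le> 2 * n + 2 * i \<longrightarrow> k = 2 * n + 2 * i \<or> k = 2 * n))"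
proof -
  interpret odd_cycle f a b p v z z0 d m P
    using assms by unfold_locales
  have "(\<lambda>n. Inf {x \<in> {d..v}. (f ^^ (2 * n)) x = d}) = u"
    by (simp add: u_def funpow_mult fun_eq_iff)
  moreover have "Sup {x \<in> {u (n + 1)..u n}. (f ^^ (2 * n + 2 * i)) x = d} = u' n i" for n i
    by (simp add: u'_def funpow_mult distrib_left)
  ultimately show ?thesis
    using periods_in_window by (simp add: Let_def)
qed

end
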